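(* Let $\Lambda\subset\mathbb{C}$ be a lattice, $p,q\ge2$ integers and $r\ge1$. Then $A_r^{sp}(z/q)B_r^{sp}(z)=B_r^{sp}(z/p)A_r^{sp}(z)$.
   Context: $\zeta(z,\Lambda)$ is the Weierstrass zeta function of $\Lambda$; $g_p(z)=p\zeta(qz,\Lambda)-\zeta(pqz,\Lambda)$ and $g_q(z)=q\zeta(pz,\Lambda)-\zeta(pqz,\Lambda)$. $A_r^{sp}=(a_{ij})$ is the upper triangular $r\times r$ matrix with $a_{ij}=\frac{p^{i-1}}{(j-i)!}g_p(z)^{j-i}$ for $i\le j$; $B_r^{sp}=(b_{ij})$ is the upper triangular matrix with $b_{ij}=\frac{q^{i-1}}{(j-i)!}g_q(z)^{j-i}$ for $i\le j$. *)

theory Defs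
  imports "HOL-Analysis.Analysis" "Jordan_Normal_Form.Matrix"
begin

definition is_lattice :: "complex set \<Rightarrow> bool" where
  "is_lattice L \<longleftrightarrow> (\<exists>w1 w2. w1 \<noteq> 0 \<and> Im (w2 / w1) \<noteq> 0 \<and>
      L = {of_int m * w1 + of_int n * w2 | m n. True})"

definition weierstrass_zeta :: "complex set \<Rightarrow> complex \<Rightarrow> complex" where
  "weierstrass_zeta L z =
     1 / z + (\<Sum>\<^sub>\<infinity>w\<in>L - {0}. 1 / (z - w) + 1 / w + z / w\<^sup>2)"

definition g_p :: "complex set \<Rightarrow> nat \<Rightarrow> nat \<Rightarrow> complex \<Rightarrow> complex" where
  "g_p L p q z = of_nat p * weierstrass_zeta L (of_nat q * z) - weierstrass_zeta L (of_nat (p*q) * z)"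

definition g_q :: "complex set \<Rightarrow> nat \<Rightarrow> nat \<Rightarrow> complex \<Rightarrow> complex" where
  "g_q L p q z = of_nat q * weierstrass_zeta L (of_nat p * z) - weierstrass_zeta L (of_nat (p*q) * z)"

text \<open>Upper triangular r x r matrices (0-based indices: entry (i,j) with i \<le> j is
  s^i / (j-i)! * g^(j-i), which is the paper's a_{i+1,j+1}).\<close>
definition sp_matrix :: "nat \<Rightarrow> nat \<Rightarrow> complex \<Rightarrow> complex mat" where
  "sp_matrix r s g = mat r r (\<lambda>(i,j). if i \<le> j then of_nat s ^ i / of_nat (fact (j - i)) * g ^ (j - i) else 0)"

definition A_sp :: "complex set \<Rightarrow> nat \<Rightarrow> nat \<Rightarrow> nat \<Rightarrow> complex \<Rightarrow> complex mat" where
  "A_sp L p q r z = sp_matrix r p (g_p L p q z)"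

definition B_sp :: "complex set \<Rightarrow> nat \<Rightarrow> nat \<Rightarrow> nat \<Rightarrow> complex \<Rightarrow> complex mat" where
  "B_sp L p q r z = sp_matrix r q (g_q L p q z)"

end

theory Submission
  imports Defs
begin

text \<open>The matrices are truncated exponentials: sp_matrix r s g is
  diag(1, s, ..., s^(r-1)) * exp(g N) for the nilpotent shift N, and
  N diag(t^j) = t diag(t^j) N.  Hence they multiply like (s, a) * (t, b) = (s t, t a + b),
  and both sides of the theorem reduce to the parameters (p q, p q zeta(z) - zeta(p q z)).
  The identity is purely formal: neither the lattice nor the position of z relative to it
  plays a role.\<close>

lemma sum_power_div_fact_binomial:
  fixes a b :: "'a::field_char_0"
  shows "(\<Sum>m\<le>n. a ^ m / fact m * (b ^ (n - m) / fact (n - m))) = (a + b) ^ n / fact n"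
proof -
  have "(\<Sum>m\<le>n. a ^ m / fact m * (b ^ (n - m) / fact (n - m)))
      = (\<Sum>m\<le>n. of_nat (n choose m) * a ^ m * b ^ (n - m)) / fact n"
    unfolding sum_divide_distrib
  proof (rule sum.cong[OF refl])
    fix m assume "m \<in> {..n}"
    then have "of_nat (n choose m) = (fact n / (fact m * fact (n - m)) :: 'a)"
      by (intro binomial_fact) auto
    then show "a ^ m / fact m * (b ^ (n - m) / fact (n - m))
             = of_nat (n choose m) * a ^ m * b ^ (n - m) / fact n"
      by simp
  qed
  also have "\<dots> = (a + b) ^ n / fact n"
    by (simp add: binomial_ring)
  finally show ?thesis .
qed

lemma sp_matrix_mult_entry:
  fixes a b :: complex
  assumes "i \<le> k" "k < r"
  shows "(\<Sum>j<r. (if i \<le> j then of_nat s ^ i / of_nat (fact (j - i)) * a ^ (j - i) else 0) *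
                 (if j \<le> k then of_nat t ^ j / of_nat (fact (k - j)) * b ^ (k - j) else 0))
       = of_nat (s * t) ^ i / of_nat (fact (k - i)) * (of_nat t * a + b) ^ (k - i)"
proof -
  define n where "n = k - i"
  have "(\<Sum>j<r. (if i \<le> j then of_nat s ^ i / of_nat (fact (j - i)) * a ^ (j - i) else 0) *
                 (if j \<le> k then of_nat t ^ j / of_nat (fact (k - j)) * b ^ (k - j) else 0))
      = (\<Sum>j\<in>{i..k}. of_nat s ^ i / fact (j - i) * a ^ (j - i) *
                 (of_nat t ^ j / fact (k - j) * b ^ (k - j)))"
    using assms by (intro sum.mono_neutral_cong_right) auto
  also have "\<dots> = (\<Sum>m\<le>n. of_nat s ^ i / fact m * a ^ m *
                 (of_nat t ^ (i + m) / fact (n - m) * b ^ (n - m)))"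
    by (rule sum.reindex_bij_witness[of _ "\<lambda>m. m + i" "\<lambda>j. j - i"])
       (use assms in \<open>auto simp: n_def\<close>)
  also have "\<dots> = of_nat (s * t) ^ i *
                 (\<Sum>m\<le>n. (of_nat t * a) ^ m / fact m * (b ^ (n - m) / fact (n - m)))"
    by (simp add: sum_distrib_left power_add power_mult_distrib field_simps)
  also have "\<dots> = of_nat (s * t) ^ i / fact n * (of_nat t * a + b) ^ n"
    unfolding sum_power_div_fact_binomial by simp
  finally show ?thesis
    by (simp add: n_def)
qed

lemma sp_matrix_mult:
  "sp_matrix r s a * sp_matrix r t b = sp_matrix r (s * t) (of_nat t * a + b)"
proof (rule eq_matI)
  fix i k
  assume "i < dim_row (sp_matrix r (s * t) (of_nat t * a + b))"
     and "k < dim_col (sp_matrix r (s * t) (of_nat t * a + b))"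
  then have ik: "i < r" "k < r"
    by (auto simp: sp_matrix_def)
  have "(sp_matrix r s a * sp_matrix r t b) $$ (i, k) =
     (\<Sum>j<r. (if i \<le> j then of_nat s ^ i / of_nat (fact (j - i)) * a ^ (j - i) else 0) *
              (if j \<le> k then of_nat t ^ j / of_nat (fact (k - j)) * b ^ (k - j) else 0))"
    using ik by (simp add: sp_matrix_def scalar_prod_def lessThan_atLeast0)
  also have "\<dots> = sp_matrix r (s * t) (of_nat t * a + b) $$ (i, k)"
  proof (cases "i \<le> k")
    case True
    then show ?thesis
      using ik sp_matrix_mult_entry[OF True ik(2)] by (simp add: sp_matrix_def)
  next
    case False
    then show ?thesis
      using ik by (auto simp: sp_matrix_def intro!: sum.neutral)
  qed
  finally show "(sp_matrix r s a * sp_matrix r t b) $$ (i, k)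
              = sp_matrix r (s * t) (of_nat t * a + b) $$ (i, k)" .
qed (auto simp: sp_matrix_def)

lemma g_p_rescaled_plus_g_q:
  assumes "q \<noteq> 0"
  shows "of_nat q * g_p L p q (z / of_nat q) + g_q L p q z
       = of_nat (p * q) * weierstrass_zeta L z - weierstrass_zeta L (of_nat (p * q) * z)"
  using assms by (simp add: g_p_def g_q_def algebra_simps)

lemma g_q_rescaled_plus_g_p:
  assumes "p \<noteq> 0"
  shows "of_nat p * g_q L p q (z / of_nat p) + g_p L p q z
       = of_nat (p * q) * weierstrass_zeta L z - weierstrass_zeta L (of_nat (p * q) * z)"
  using assms by (simp add: g_p_def g_q_def algebra_simps)

theorem lemma5p10:
  fixes L :: "complex set" and p q r :: nat and z :: complex
  assumes "is_lattice L" and "p \<ge> 2" and "q \<ge> 2" and "r \<ge> 1"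
    and "z \<notin> L" and "of_nat p * z \<notin> L" and "of_nat q * z \<notin> L"
    and "of_nat (p*q) * z \<notin> L"
  shows "A_sp L p q r (z / of_nat q) * B_sp L p q r z = B_sp L p q r (z / of_nat p) * A_sp L p q r z"
proof -
  have "p \<noteq> 0" "q \<noteq> 0"
    using assms(2,3) by auto
  then show ?thesis
    unfolding A_sp_def B_sp_def sp_matrix_mult
    by (simp add: g_p_rescaled_plus_g_q g_q_rescaled_plus_g_p mult.commute[of q p])
qed

end
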